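(* Let $T_i,T_j$ be indecomposable summands of a maximal rigid object $T$ of $\mathcal{C}_n$. Then either $T_i\in\mathcal{W}_{T_j}$, or $T_j\in\mathcal{W}_{T_i}$, or $\mathcal{W}_{T_i}\cap\mathcal{W}_{T_j}=\emptyset$.
   Context: Let $k$ be algebraically closed, $n\ge2$, $\mathcal{T}_n$ the tube of rank $n$ (finite-dimensional nilpotent representations of the cyclically oriented $\tilde A_{n-1}$-quiver; AR-translation $\tau$), $\mathcal{C}_n=D^b(\mathcal{T}_n)/\tau^{-1}[1]$ the cluster tube, with indecomposables identified with those of $\mathcal{T}_n$. Indecomposables have coordinates $(a,b)$, $a\in\mathbb{Z}/n$, $b\ge1$ the quasilength, with $\tau(a,b)=(a-1,b)$ and irreducible maps $(a,b)\to(a,b+1)$ and $(a,b)\to(a+1,b-1)$. For $X=(a,i)$, $i\le n-1$, the wing $\mathcal{W}_X$ is $\{(a+s,i'):s\ge0,i'\ge1,s+i'\le i\}$. $T$ is maximal rigid if $\operatorname{Ext}^1_{\mathcal{C}_n}(T,T)=0$ and $\operatorname{Ext}^1(T\oplus X,T\oplus X)=0$ implies $X\in\operatorname{add}T$; all indecomposable summands of a maximal rigid object have quasilength at most $n-1$. *)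

theory Defs
  imports Main
begin

text \<open>An indecomposable is a pair (a, b) with a the quasi-socle position in {0..<n}
  (representing Z/n) and b >= 1 the quasilength.  The uniserial module (a,b) has
  composition factors S_a (socle), S_(a+1), ..., S_(a+b-1) (top), indices mod n.
  Thus (a,b) -> (a,b+1) is the irreducible mono, (a,b) -> (a+1,b-1) the irreducible
  epi, and tau (a,b) = (a-1,b).\<close>

type_synonym tind = "nat \<times> nat"

definition ind :: "nat \<Rightarrow> tind set" where
  "ind n = {(a, b). a < n \<and> 1 \<le> b}"

definition tau :: "nat \<Rightarrow> tind \<Rightarrow> tind" where
  "tau n X = ((fst X + n - 1) mod n, snd X)"

text \<open>dim Hom_{T_n}((a,b),(c,d)): a nonzero map factors through an image of length k,
  which is the top part of (a,b) and the bottom part of (c,d).\<close>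
definition homdim :: "nat \<Rightarrow> tind \<Rightarrow> tind \<Rightarrow> nat" where
  "homdim n X Y = card {k. 1 \<le> k \<and> k \<le> min (snd X) (snd Y)
      \<and> (fst X + snd X - k) mod n = fst Y mod n}"

text \<open>dim Ext^1_{C_n}(X,Y) = dim Ext^1_T(X,Y) + dim Ext^1_T(Y,X)
   = dim Hom_T(Y, tau X) + dim Hom_T(X, tau Y)  (Auslander-Reiten formula).\<close>
definition extdim_C :: "nat \<Rightarrow> tind \<Rightarrow> tind \<Rightarrow> nat" where
  "extdim_C n X Y = homdim n Y (tau n X) + homdim n X (tau n Y)"

text \<open>An object of C_n is a finite direct sum of indecomposables; up to multiplicities
  (irrelevant for Ext-vanishing and add) it is given by its finite set of
  indecomposable summands.\<close>
definition rigid :: "nat \<Rightarrow> tind set \<Rightarrow> bool" where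
  "rigid n T \<longleftrightarrow> (\<forall>X\<in>T. \<forall>Y\<in>T. extdim_C n X Y = 0)"

definition maximal_rigid :: "nat \<Rightarrow> tind set \<Rightarrow> bool" where
  "maximal_rigid n T \<longleftrightarrow> finite T \<and> T \<subseteq> ind n \<and> rigid n T \<and>
     (\<forall>X. finite X \<and> X \<subseteq> ind n \<and> rigid n (T \<union> X) \<longrightarrow> X \<subseteq> T)"

definition wing :: "nat \<Rightarrow> tind \<Rightarrow> tind set" where
  "wing n X = {((fst X + s) mod n, i') | s i'. 1 \<le> i' \<and> s + i' \<le> snd X}"

end

theory Submission
  imports Defs
begin

text \<open>Rigidity forces quasilengths below n, so
  overlapping wings make the socle of one summand lie inside the quasilength range of the other,
  say at forward distance r < b from a. If neither wing contains the other summand, then (c,d)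
  starts strictly inside (a,b) and sticks out beyond its top, and the common segment of length
  b - r + 1 gives a nonzero map (a,b) \<rightarrow> \<tau>(c,d), i.e. a nonzero extension in the cluster tube.\<close>

definition forward_dist :: "nat \<Rightarrow> nat \<Rightarrow> nat \<Rightarrow> nat" where
  "forward_dist n a c = (c + n - a) mod n"

lemma forward_dist_eq:
  assumes "a < n" "c < n"
  shows "forward_dist n a c = (if a \<le> c then c - a else c + n - a)"
  using assms by (auto simp: forward_dist_def le_mod_geq)

lemma forward_dist_unique:
  assumes "a < n" "c < n" "r < n" "(a + r) mod n = c"
  shows "forward_dist n a c = r"
  using assms by (auto simp: forward_dist_eq mod_if split: if_splits)

lemma add_forward_dist_mod:
  assumes "a < n" "c < n"
  shows "(a + forward_dist n a c) mod n = c"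
  using assms by (auto simp: forward_dist_eq le_mod_geq)

lemma forward_dist_eq_0_commute:
  assumes "a < n" "c < n" "forward_dist n a c = 0"
  shows "forward_dist n c a = 0"
  using assms by (auto simp: forward_dist_eq split: if_splits)

lemma mem_wingI:
  assumes "a < n" "c < n" "1 \<le> d" "forward_dist n a c + d \<le> b"
  shows "(c, d) \<in> wing n (a, b)"
  unfolding wing_def using assms add_forward_dist_mod[of a n c] by force

lemma homdim_neq_0I:
  assumes "1 \<le> k" "k \<le> min (snd X) (snd Y)" "(fst X + snd X - k) mod n = fst Y mod n"
  shows "homdim n X Y \<noteq> 0"
proof -
  have "finite {k. 1 \<le> k \<and> k \<le> min (snd X) (snd Y) \<and> (fst X + snd X - k) mod n = fst Y mod n}"
    by (rule finite_subset[of _ "{..min (snd X) (snd Y)}"]) auto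
  then show ?thesis
    using assms unfolding homdim_def by (metis (mono_tags, lifting) card_0_eq empty_iff mem_Collect_eq)
qed

lemma quasilength_less_if_no_self_ext:
  assumes "a < n" "extdim_C n (a, b) (a, b) = 0"
  shows "b < n"
proof (rule ccontr)
  assume "\<not> b < n"
  then have "homdim n (a, b) (tau n (a, b)) \<noteq> 0"
    using assms(1) by (intro homdim_neq_0I[where k = "b + 1 - n"]) (auto simp: tau_def)
  then show False using assms(2) by (simp add: extdim_C_def)
qed

lemma forward_dist_less_if_wings_meet:
  assumes "a < n" "c < n" "b < n" "d < n"
    and "wing n (a, b) \<inter> wing n (c, d) \<noteq> {}"
  shows "forward_dist n a c < b \<or> forward_dist n c a < d"
proof -
  obtain s t i where st: "(a + s) mod n = (c + t) mod n" "1 \<le> i" "s + i \<le> b" "t + i \<le> d"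
    using assms(5) unfolding wing_def by auto
  show ?thesis
  proof (cases "t \<le> s")
    case True
    have "(a + (s - t)) mod n = c"
      using st True assms by (auto simp: mod_if split: if_splits)
    then show ?thesis
      using forward_dist_unique[of a n c "s - t"] assms st by auto
  next
    case False
    have "(c + (t - s)) mod n = a"
      using st False assms by (auto simp: mod_if split: if_splits)
    then show ?thesis
      using forward_dist_unique[of c n a "t - s"] assms st by auto
  qed
qed

lemma homdim_tau_neq_0_if_straddling:
  assumes "a < n" "c < n" "r = forward_dist n a c" "1 \<le> r" "r < b" "b < r + d"
  shows "homdim n (a, b) (tau n (c, d)) \<noteq> 0"
proof -
  have "a + r = c \<or> a + r = c + n"
    using forward_dist_eq[OF assms(1,2)] assms(1,3) by auto
  then consider "c + n - 1 = (a + r - 1) + n" | "c + n - 1 = a + r - 1"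
    using assms(4) by linarith
  then have "(a + r - 1) mod n = (c + n - 1) mod n"
    by cases simp_all
  moreover have "a + b - (b - r + 1) = a + r - 1" using assms(4,5) by simp
  ultimately show ?thesis
    using assms(4-6) by (intro homdim_neq_0I[where k = "b - r + 1"]) (auto simp: tau_def)
qed

lemma wing_nested_if_hom_tau_eq_0:
  assumes "a < n" "c < n" "1 \<le> b" "1 \<le> d" "forward_dist n a c < b"
    and "homdim n (a, b) (tau n (c, d)) = 0"
  shows "(c, d) \<in> wing n (a, b) \<or> (a, b) \<in> wing n (c, d)"
proof -
  define r where "r = forward_dist n a c"
  consider "r + d \<le> b" | "r = 0" "b < d" | "1 \<le> r" "b < r + d" by linarith
  then show ?thesis
  proof cases
    case 1
    then show ?thesis using mem_wingI[OF assms(1,2,4)] r_def by simp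
  next
    case 2
    then have "forward_dist n c a + b \<le> d"
      using forward_dist_eq_0_commute assms(1,2) r_def by simp
    then show ?thesis using mem_wingI[OF assms(2,1,3)] by simp
  next
    case 3
    have "homdim n (a, b) (tau n (c, d)) \<noteq> 0"
      by (rule homdim_tau_neq_0_if_straddling[OF assms(1,2) r_def]) (use 3 assms(5) r_def in auto)
    with assms(6) show ?thesis by contradiction
  qed
qed

lemma wings_nested_or_disjoint_if_rigid:
  assumes "{X, Y} \<subseteq> ind n" and "rigid n {X, Y}"
  shows "X \<in> wing n Y \<or> Y \<in> wing n X \<or> wing n X \<inter> wing n Y = {}"
proof (rule ccontr)
  obtain a b c d where X: "X = (a, b)" and Y: "Y = (c, d)" by fastforce
  assume "\<not> ?thesis"
  then have not_nested: "\<not> ((c, d) \<in> wing n (a, b) \<or> (a, b) \<in> wing n (c, d))"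
    and meet: "wing n (a, b) \<inter> wing n (c, d) \<noteq> {}"
    by (auto simp: X Y)
  have ab: "a < n" "1 \<le> b" and cd: "c < n" "1 \<le> d"
    using assms(1) by (auto simp: X Y ind_def)
  have ext0: "extdim_C n (a, b) (a, b) = 0" "extdim_C n (c, d) (c, d) = 0"
    "extdim_C n (a, b) (c, d) = 0" "extdim_C n (c, d) (a, b) = 0"
    using assms(2) by (auto simp: X Y rigid_def)
  have "b < n" "d < n"
    using quasilength_less_if_no_self_ext ab(1) cd(1) ext0(1,2) by blast+
  then consider "forward_dist n a c < b" | "forward_dist n c a < d"
    using forward_dist_less_if_wings_meet[OF ab(1) cd(1) _ _ meet] by blast
  then show False
  proof cases
    case 1
    moreover have "homdim n (a, b) (tau n (c, d)) = 0"
      using ext0(4) by (simp add: extdim_C_def)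
    ultimately show False
      using wing_nested_if_hom_tau_eq_0[OF ab(1) cd(1) ab(2) cd(2)] not_nested by simp
  next
    case 2
    moreover have "homdim n (c, d) (tau n (a, b)) = 0"
      using ext0(3) by (simp add: extdim_C_def)
    ultimately show False
      using wing_nested_if_hom_tau_eq_0[OF cd(1) ab(1) cd(2) ab(2)] not_nested by simp
  qed
qed

theorem lemma2p6:
  fixes n :: nat and T :: "tind set" and Ti Tj :: tind
  assumes "2 \<le> n" and "maximal_rigid n T" and "Ti \<in> T" and "Tj \<in> T"
  shows "Ti \<in> wing n Tj \<or> Tj \<in> wing n Ti \<or> wing n Ti \<inter> wing n Tj = {}"
proof (rule wings_nested_or_disjoint_if_rigid)
  have "T \<subseteq> ind n" "rigid n T"
    using assms(2) by (auto simp: maximal_rigid_def)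
  then show "{Ti, Tj} \<subseteq> ind n" "rigid n {Ti, Tj}"
    using assms(3,4) by (auto simp: rigid_def)
qed

end
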